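(* Let $(D,T,k)$ be an instance, $\alpha\ge 1$ a real number, and $\sigma=(v_1,\dots,v_n)$ a regular order of $V(D)$ with $\mathrm{cost}(\sigma)\le\alpha k$, such that $(D,T,k)$ is reduced with respect to $\sigma$. Let $t\in T$ and let $e$ be an affected arc above $t$ with span $[v_l,v_r]$. Then, with $\ell=2(\alpha+1)k+2$, we have $t=v_i$ for some $i$ with $l\le i\le l+\ell$ or $r-\ell\le i\le r$.
   Context: $D$ is a tournament, $T\subseteq V(D)$ is the terminal set, $k$ a positive integer. For an order $\sigma=(v_1,\dots,v_n)$: $[v_l,v_r]=\{v_i:l\le i\le r\}$; an arc $v_iv_j$ is forward if $i<j$, backward if $i>j$; the span of backward arc $v_rv_l$ is $[v_l,v_r]$, and it is above each vertex of its span; a backward arc above a terminal is affected; $\mathrm{cost}(\sigma)$ is the number of affected arcs. A non-terminal interval is an interval with no terminal. $N^+_X(v)=\{u\in X:vu\in A(D)\}$, $N^-_X(v)=\{u\in X:uv\in A(D)\}$. $\sigma$ is regular if for every non-terminal interval $I=[v_l,v_r]$, $|N^+_I(v_l)|\ge\lceil(r-l)/2\rceil$ and $|N^-_I(v_r)|\ge\lceil(r-l)/2\rceil$. A $T$-cycle is a directed cycle containing a terminal. The instance is reduced with respect to $\sigma$ if: $k\ge 1$; $D$ contains a $T$-cycle; every vertex of $D$ lies on some $T$-cycle; and there is no affected arc $uv$ above a terminal $t$ for which there exist $k+1$ pairwise arc-disjoint directed paths from $v$ to $u$ each containing $t$ and consisting only of forward arcs. *)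

theory Defs
  imports Complex_Main
begin

text \<open>A digraph is given by a vertex set V and an arc set A of ordered pairs.
  Orders are lists of vertices; positions are 0-based indices.\<close>

definition tournament :: "'a set \<Rightarrow> ('a \<times> 'a) set \<Rightarrow> bool" where
  "tournament V A \<longleftrightarrow> finite V \<and> A \<subseteq> V \<times> V \<and> (\<forall>v. (v, v) \<notin> A) \<and>
     (\<forall>u\<in>V. \<forall>v\<in>V. u \<noteq> v \<longrightarrow> ((u, v) \<in> A \<longleftrightarrow> (v, u) \<notin> A))"

definition is_order :: "'a set \<Rightarrow> 'a list \<Rightarrow> bool" where
  "is_order V \<sigma> \<longleftrightarrow> distinct \<sigma> \<and> set \<sigma> = V"

text \<open>Position of a vertex in the order (meaningful for v in the distinct list).\<close>
definition pos :: "'a list \<Rightarrow> 'a \<Rightarrow> nat" where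
  "pos \<sigma> v = (THE i. i < length \<sigma> \<and> \<sigma> ! i = v)"

definition ival :: "'a list \<Rightarrow> nat \<Rightarrow> nat \<Rightarrow> 'a set" where
  "ival \<sigma> l r = {\<sigma> ! i | i. l \<le> i \<and> i \<le> r \<and> i < length \<sigma>}"

definition forward_arc :: "'a list \<Rightarrow> 'a \<times> 'a \<Rightarrow> bool" where
  "forward_arc \<sigma> e \<longleftrightarrow> pos \<sigma> (fst e) < pos \<sigma> (snd e)"

definition backward_arc :: "'a list \<Rightarrow> 'a \<times> 'a \<Rightarrow> bool" where
  "backward_arc \<sigma> e \<longleftrightarrow> pos \<sigma> (fst e) > pos \<sigma> (snd e)"

text \<open>The backward arc v_r v_l has span [v_l, v_r]; it is above every vertex of its span.\<close>
definition arc_above :: "'a list \<Rightarrow> 'a \<times> 'a \<Rightarrow> 'a \<Rightarrow> bool" where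
  "arc_above \<sigma> e x \<longleftrightarrow> backward_arc \<sigma> e \<and> x \<in> ival \<sigma> (pos \<sigma> (snd e)) (pos \<sigma> (fst e))"

definition affected :: "'a set \<Rightarrow> 'a list \<Rightarrow> 'a \<times> 'a \<Rightarrow> bool" where
  "affected T \<sigma> e \<longleftrightarrow> (\<exists>t\<in>T. arc_above \<sigma> e t)"

definition cost :: "('a \<times> 'a) set \<Rightarrow> 'a set \<Rightarrow> 'a list \<Rightarrow> nat" where
  "cost A T \<sigma> = card {e \<in> A. affected T \<sigma> e}"

definition out_nbrs :: "('a \<times> 'a) set \<Rightarrow> 'a set \<Rightarrow> 'a \<Rightarrow> 'a set" where
  "out_nbrs A X v = {u \<in> X. (v, u) \<in> A}"

definition in_nbrs :: "('a \<times> 'a) set \<Rightarrow> 'a set \<Rightarrow> 'a \<Rightarrow> 'a set" where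
  "in_nbrs A X v = {u \<in> X. (u, v) \<in> A}"

definition regular_order :: "('a \<times> 'a) set \<Rightarrow> 'a set \<Rightarrow> 'a list \<Rightarrow> bool" where
  "regular_order A T \<sigma> \<longleftrightarrow>
     (\<forall>l r. l \<le> r \<and> r < length \<sigma> \<and> ival \<sigma> l r \<inter> T = {} \<longrightarrow>
        card (out_nbrs A (ival \<sigma> l r) (\<sigma> ! l)) \<ge> nat (ceiling (real (r - l) / 2)) \<and>
        card (in_nbrs A (ival \<sigma> l r) (\<sigma> ! r)) \<ge> nat (ceiling (real (r - l) / 2)))"

definition dcycle :: "('a \<times> 'a) set \<Rightarrow> 'a list \<Rightarrow> bool" where
  "dcycle A xs \<longleftrightarrow> distinct xs \<and> length xs \<ge> 2 \<and>
     (\<forall>i < length xs. (xs ! i, xs ! ((i + 1) mod length xs)) \<in> A)"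

definition T_cycle :: "('a \<times> 'a) set \<Rightarrow> 'a set \<Rightarrow> 'a list \<Rightarrow> bool" where
  "T_cycle A T xs \<longleftrightarrow> dcycle A xs \<and> set xs \<inter> T \<noteq> {}"

definition dpath :: "('a \<times> 'a) set \<Rightarrow> 'a list \<Rightarrow> 'a \<Rightarrow> 'a \<Rightarrow> bool" where
  "dpath A p u v \<longleftrightarrow> p \<noteq> [] \<and> hd p = u \<and> last p = v \<and> distinct p \<and>
     (\<forall>i. i + 1 < length p \<longrightarrow> (p ! i, p ! (i + 1)) \<in> A)"

definition path_arcs :: "'a list \<Rightarrow> ('a \<times> 'a) set" where
  "path_arcs p = set (zip p (tl p))"

definition reduced :: "'a set \<Rightarrow> ('a \<times> 'a) set \<Rightarrow> 'a set \<Rightarrow> nat \<Rightarrow> 'a list \<Rightarrow> bool" where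
  "reduced V A T k \<sigma> \<longleftrightarrow>
     k \<ge> 1 \<and>
     (\<exists>xs. T_cycle A T xs) \<and>
     (\<forall>v\<in>V. \<exists>xs. T_cycle A T xs \<and> v \<in> set xs) \<and>
     \<not> (\<exists>u v t P. (u, v) \<in> A \<and> affected T \<sigma> (u, v) \<and> t \<in> T \<and> arc_above \<sigma> (u, v) t \<and>
          (\<forall>i\<le>k. dpath A (P i) v u \<and> t \<in> set (P i) \<and>
                  (\<forall>e\<in>path_arcs (P i). forward_arc \<sigma> e)) \<and>
          (\<forall>i\<le>k. \<forall>j\<le>k. i \<noteq> j \<longrightarrow> path_arcs (P i) \<inter> path_arcs (P j) = {}))"

end

theory Submission
  imports Defs
begin

text \<open>Suppose the terminal \<open>t = v\<^sub>i\<close> lies deep inside the span of the affected arc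
  \<open>v\<^sub>r v\<^sub>l\<close>. Between \<open>v\<^sub>l\<close> and \<open>t\<close> almost every vertex \<open>x\<close> gives a forward path
  \<open>v\<^sub>l x t\<close>: the exceptions are heads or tails of backward arcs, which are either
  affected (at most \<open>\<alpha> k\<close> of them) or confined by regularity to a terminal-free
  prefix (at most half of the vertices). So there are \<open>k + 1\<close> such \<open>x\<close>, and by the
  mirror argument \<open>k + 1\<close> vertices \<open>y\<close> with forward paths \<open>t y v\<^sub>r\<close>. Pairing them
  gives \<open>k + 1\<close> arc-disjoint forward \<open>v\<^sub>l\<close>-\<open>v\<^sub>r\<close> paths through \<open>t\<close>, contradicting
  reducedness.\<close>

lemma pos_nth: "distinct \<sigma> \<Longrightarrow> m < length \<sigma> \<Longrightarrow> pos \<sigma> (\<sigma> ! m) = m"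
  unfolding pos_def by (rule the_equality) (auto simp: nth_eq_iff_index_eq)

lemma pos_less_length: "distinct \<sigma> \<Longrightarrow> v \<in> set \<sigma> \<Longrightarrow> pos \<sigma> v < length \<sigma>"
  by (metis in_set_conv_nth pos_nth)

lemma nth_pos: "distinct \<sigma> \<Longrightarrow> v \<in> set \<sigma> \<Longrightarrow> \<sigma> ! pos \<sigma> v = v"
  by (metis in_set_conv_nth pos_nth)

lemma ival_nth: "distinct \<sigma> \<Longrightarrow> m < length \<sigma> \<Longrightarrow> \<sigma> ! m \<in> ival \<sigma> a b \<longleftrightarrow> a \<le> m \<and> m \<le> b"
  unfolding ival_def by (auto simp: nth_eq_iff_index_eq)

lemma ival_eq_image: "b < length \<sigma> \<Longrightarrow> ival \<sigma> a b = (!) \<sigma> ` {a..b}"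
  unfolding ival_def by auto

lemma finite_ival: "finite (ival \<sigma> a b)"
  by (rule finite_subset[of _ "set \<sigma>"]) (auto simp: ival_def)

lemma card_ival: "distinct \<sigma> \<Longrightarrow> b < length \<sigma> \<Longrightarrow> card (ival \<sigma> a b) = Suc b - a"
  by (simp add: ival_eq_image card_image inj_on_def nth_eq_iff_index_eq)

lemma arc_above_nth:
  assumes "distinct \<sigma>" "a < length \<sigma>" "b < length \<sigma>" "m < length \<sigma>"
  shows "arc_above \<sigma> (\<sigma> ! a, \<sigma> ! b) (\<sigma> ! m) \<longleftrightarrow> b < a \<and> b \<le> m \<and> m \<le> a"
  using assms by (auto simp: arc_above_def backward_arc_def pos_nth ival_nth)

definition forward_midpoints :: "('a \<times> 'a) set \<Rightarrow> 'a list \<Rightarrow> 'a \<Rightarrow> 'a \<Rightarrow> 'a set" where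
  "forward_midpoints A \<sigma> u w =
     {x. (u, x) \<in> A \<and> (x, w) \<in> A \<and> forward_arc \<sigma> (u, x) \<and> forward_arc \<sigma> (x, w)}"

lemma finite_forward_midpoints: "finite A \<Longrightarrow> finite (forward_midpoints A \<sigma> u w)"
  by (rule finite_subset[of _ "snd ` A"]) (force simp: forward_midpoints_def)+

text \<open>Reversing both the order and every arc preserves all the notions involved and
  exchanges the two sides of a vertex; this yields the right-hand counting bound from the
  left-hand one.\<close>

lemma pos_rev:
  assumes "distinct \<sigma>" "v \<in> set \<sigma>"
  shows "pos (rev \<sigma>) v = length \<sigma> - Suc (pos \<sigma> v)"
proof -
  have p: "pos \<sigma> v < length \<sigma>" using assms by (rule pos_less_length)
  then have "rev \<sigma> ! (length \<sigma> - Suc (pos \<sigma> v)) = v"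
    using assms by (simp add: rev_nth nth_pos Suc_diff_Suc)
  moreover have "length \<sigma> - Suc (pos \<sigma> v) < length (rev \<sigma>)" using p by simp
  ultimately show ?thesis using assms pos_nth[of "rev \<sigma>"] by force
qed

lemma ival_rev:
  assumes "a \<le> b" "b < length \<sigma>"
  shows "ival (rev \<sigma>) a b = ival \<sigma> (length \<sigma> - Suc b) (length \<sigma> - Suc a)"
proof -
  have "ival (rev \<sigma>) a b = (\<lambda>m. \<sigma> ! (length \<sigma> - Suc m)) ` {a..b}"
    using assms by (auto simp: ival_eq_image rev_nth)
  also have "\<dots> = (!) \<sigma> ` (\<lambda>m. length \<sigma> - Suc m) ` {a..b}"
    by (simp add: image_image)
  also have "(\<lambda>m. length \<sigma> - Suc m) ` {a..b} = {length \<sigma> - Suc b..length \<sigma> - Suc a}"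
  proof (rule set_eqI, rule iffI)
    fix x assume "x \<in> {length \<sigma> - Suc b..length \<sigma> - Suc a}"
    then show "x \<in> (\<lambda>m. length \<sigma> - Suc m) ` {a..b}" using assms
      by (intro image_eqI[of _ _ "length \<sigma> - Suc x"]) auto
  qed (use assms in auto)
  finally show ?thesis using assms by (simp add: ival_eq_image)
qed

lemma forward_arc_rev:
  assumes "distinct \<sigma>" "u \<in> set \<sigma>" "v \<in> set \<sigma>"
  shows "forward_arc (rev \<sigma>) (v, u) \<longleftrightarrow> forward_arc \<sigma> (u, v)"
  using pos_less_length[OF assms(1,2)] pos_less_length[OF assms(1,3)]
  by (auto simp: forward_arc_def pos_rev assms)

lemma backward_arc_rev:
  assumes "distinct \<sigma>" "u \<in> set \<sigma>" "v \<in> set \<sigma>"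
  shows "backward_arc (rev \<sigma>) (v, u) \<longleftrightarrow> backward_arc \<sigma> (u, v)"
  using pos_less_length[OF assms(1,2)] pos_less_length[OF assms(1,3)]
  by (auto simp: backward_arc_def pos_rev assms)

lemma arc_above_rev:
  assumes "distinct \<sigma>" "u \<in> set \<sigma>" "v \<in> set \<sigma>"
  shows "arc_above (rev \<sigma>) (v, u) x \<longleftrightarrow> arc_above \<sigma> (u, v) x"
proof (cases "backward_arc \<sigma> (u, v)")
  case True
  let ?n = "length \<sigma>"
  have "pos \<sigma> v < pos \<sigma> u" "pos \<sigma> u < ?n"
    using True assms pos_less_length by (auto simp: backward_arc_def)
  then have "ival (rev \<sigma>) (pos (rev \<sigma>) u) (pos (rev \<sigma>) v) = ival \<sigma> (pos \<sigma> v) (pos \<sigma> u)"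
    using assms by (simp add: pos_rev ival_rev Suc_diff_Suc)
  then show ?thesis using True assms by (simp add: arc_above_def backward_arc_rev)
qed (use assms in \<open>simp add: arc_above_def backward_arc_rev\<close>)

lemma affected_rev:
  assumes "distinct \<sigma>" "u \<in> set \<sigma>" "v \<in> set \<sigma>"
  shows "affected T (rev \<sigma>) (v, u) \<longleftrightarrow> affected T \<sigma> (u, v)"
  using assms by (simp add: affected_def arc_above_rev)

lemma cost_converse_rev:
  assumes "distinct \<sigma>" "A \<subseteq> set \<sigma> \<times> set \<sigma>"
  shows "cost (A\<inverse>) T (rev \<sigma>) = cost A T \<sigma>"
proof -
  have "{e \<in> A\<inverse>. affected T (rev \<sigma>) e} = prod.swap ` {e \<in> A. affected T \<sigma> e}"
    using assms by (auto simp: affected_rev)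
  then show ?thesis by (simp add: cost_def card_image)
qed

lemma tournament_converse: "tournament V A \<Longrightarrow> tournament V (A\<inverse>)"
  unfolding tournament_def by blast

lemma regular_order_converse_rev:
  assumes "distinct \<sigma>" "regular_order A T \<sigma>"
  shows "regular_order (A\<inverse>) T (rev \<sigma>)"
  unfolding regular_order_def
proof (intro allI impI)
  fix l r
  assume lr: "l \<le> r \<and> r < length (rev \<sigma>) \<and> ival (rev \<sigma>) l r \<inter> T = {}"
  let ?n = "length \<sigma>"
  have I: "ival (rev \<sigma>) l r = ival \<sigma> (?n - Suc r) (?n - Suc l)"
    using lr by (simp add: ival_rev)
  have "?n - Suc r \<le> ?n - Suc l" "?n - Suc l < ?n" using lr by auto
  then have "nat \<lceil>real (?n - Suc l - (?n - Suc r)) / 2\<rceil>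
      \<le> card (out_nbrs A (ival \<sigma> (?n - Suc r) (?n - Suc l)) (\<sigma> ! (?n - Suc r))) \<and>
    nat \<lceil>real (?n - Suc l - (?n - Suc r)) / 2\<rceil>
      \<le> card (in_nbrs A (ival \<sigma> (?n - Suc r) (?n - Suc l)) (\<sigma> ! (?n - Suc l)))"
    using assms(2) lr I unfolding regular_order_def by blast
  moreover have "?n - Suc l - (?n - Suc r) = r - l" using lr by simp
  moreover have "rev \<sigma> ! l = \<sigma> ! (?n - Suc l)" "rev \<sigma> ! r = \<sigma> ! (?n - Suc r)"
    using lr by (simp_all add: rev_nth)
  moreover have "out_nbrs (A\<inverse>) X v = in_nbrs A X v" "in_nbrs (A\<inverse>) X v = out_nbrs A X v" for X v
    by (auto simp: out_nbrs_def in_nbrs_def)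
  ultimately show "nat \<lceil>real (r - l) / 2\<rceil> \<le> card (out_nbrs (A\<inverse>) (ival (rev \<sigma>) l r) (rev \<sigma> ! l)) \<and>
    nat \<lceil>real (r - l) / 2\<rceil> \<le> card (in_nbrs (A\<inverse>) (ival (rev \<sigma>) l r) (rev \<sigma> ! r))"
    using I by simp
qed

lemma forward_midpoints_converse_rev:
  assumes "distinct \<sigma>" "A \<subseteq> set \<sigma> \<times> set \<sigma>"
  shows "forward_midpoints (A\<inverse>) (rev \<sigma>) w u = forward_midpoints A \<sigma> u w"
  using assms by (auto simp: forward_midpoints_def forward_arc_rev)

lemma tournament_card_in_out_nbrs:
  assumes "tournament V A" "X \<subseteq> V" "v \<in> X"
  shows "card (in_nbrs A X v) + card (out_nbrs A X v) \<le> card X - 1"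
proof -
  have "finite X" using assms finite_subset unfolding tournament_def by blast
  moreover have "in_nbrs A X v \<inter> out_nbrs A X v = {}"
  proof -
    have "(v, u) \<notin> A" if "u \<in> X" "(u, v) \<in> A" for u
      using assms that unfolding tournament_def by (cases "u = v") blast+
    then show ?thesis unfolding in_nbrs_def out_nbrs_def by blast
  qed
  moreover have "in_nbrs A X v \<union> out_nbrs A X v \<subseteq> X - {v}"
    using assms unfolding in_nbrs_def out_nbrs_def tournament_def by blast
  ultimately show ?thesis
    by (metis card_Diff_singleton assms(3) card_Un_disjoint card_mono finite_Diff finite_subset le_sup_iff)
qed

lemma le_twice_nat_ceiling_half: "m \<le> 2 * nat \<lceil>real m / 2\<rceil>"
proof -
  have "real m / 2 \<le> real (nat \<lceil>real m / 2\<rceil>)" by linarith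
  then show ?thesis by linarith
qed

lemma regular_order_card_backward_to_left_end:
  assumes tour: "tournament V A" and ord: "is_order V \<sigma>" and reg: "regular_order A T \<sigma>"
    and "j \<le> length \<sigma>" and no_T: "\<forall>m. l \<le> m \<longrightarrow> m < j \<longrightarrow> \<sigma> ! m \<notin> T"
  shows "2 * card {x. l < x \<and> x < j \<and> (\<sigma> ! x, \<sigma> ! l) \<in> A} \<le> j - l - 1"
proof (cases "l < j")
  case True
  define I where "I = ival \<sigma> l (j - 1)"
  have dist: "distinct \<sigma>" and V: "V = set \<sigma>" using ord by (auto simp: is_order_def)
  have j: "l \<le> j - 1" "j - 1 < length \<sigma>" using True assms(4) by auto
  have "I \<inter> T = {}" using no_T True by (auto simp: I_def ival_def)
  then have out: "nat \<lceil>real (j - 1 - l) / 2\<rceil> \<le> card (out_nbrs A I (\<sigma> ! l))"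
    using reg j unfolding regular_order_def I_def by blast
  have I_V: "I \<subseteq> V" and l_I: "\<sigma> ! l \<in> I" using j dist V by (auto simp: I_def ival_def)
  have "card I = j - l" using card_ival[OF dist j(2)] True by (simp add: I_def)
  then have deg: "card (in_nbrs A I (\<sigma> ! l)) + card (out_nbrs A I (\<sigma> ! l)) \<le> j - 1 - l"
    using tournament_card_in_out_nbrs[OF tour I_V l_I] by simp
  have "(!) \<sigma> ` {x. l < x \<and> x < j \<and> (\<sigma> ! x, \<sigma> ! l) \<in> A} \<subseteq> in_nbrs A I (\<sigma> ! l)"
    using j by (auto simp: in_nbrs_def I_def ival_def)
  moreover have "inj_on ((!) \<sigma>) {x. l < x \<and> x < j \<and> (\<sigma> ! x, \<sigma> ! l) \<in> A}"
    using j dist by (auto simp: inj_on_def nth_eq_iff_index_eq)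
  moreover have "finite (in_nbrs A I (\<sigma> ! l))"
    by (simp add: I_def finite_ival in_nbrs_def)
  ultimately have "card {x. l < x \<and> x < j \<and> (\<sigma> ! x, \<sigma> ! l) \<in> A} \<le> card (in_nbrs A I (\<sigma> ! l))"
    by (simp add: card_image[symmetric] card_mono)
  then show ?thesis using deg out le_twice_nat_ceiling_half[of "j - 1 - l"] by linarith
qed simp

lemma nth_in_forward_midpoints:
  assumes tour: "tournament V A" and ord: "is_order V \<sigma>"
    and "l < x" "x < i" "i < length \<sigma>"
    and "(\<sigma> ! x, \<sigma> ! l) \<notin> A" "(\<sigma> ! i, \<sigma> ! x) \<notin> A"
  shows "\<sigma> ! x \<in> forward_midpoints A \<sigma> (\<sigma> ! l) (\<sigma> ! i)"
proof -
  have dist: "distinct \<sigma>" and V: "V = set \<sigma>" using ord by (auto simp: is_order_def)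
  have "\<sigma> ! x \<noteq> \<sigma> ! l" "\<sigma> ! x \<noteq> \<sigma> ! i" "\<sigma> ! l \<in> V" "\<sigma> ! x \<in> V" "\<sigma> ! i \<in> V"
    using assms(3-5) dist V by (auto simp: nth_eq_iff_index_eq)
  then have "(\<sigma> ! l, \<sigma> ! x) \<in> A" "(\<sigma> ! x, \<sigma> ! i) \<in> A"
    using tour assms(6,7) unfolding tournament_def by blast+
  then show ?thesis
    using assms(3-5) dist by (simp add: forward_midpoints_def forward_arc_def pos_nth)
qed

lemma card_backward_across_terminals_le_cost:
  assumes "finite A" "distinct \<sigma>" "i < length \<sigma>" "\<sigma> ! i \<in> T" "\<sigma> ! j \<in> T" "l \<le> j" "j \<le> i"
  shows "card {x \<in> {l<..<i}. (\<sigma> ! i, \<sigma> ! x) \<in> A}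
    + card {x \<in> {l<..<i}. j \<le> x \<and> (\<sigma> ! x, \<sigma> ! l) \<in> A} \<le> cost A T \<sigma>"
    (is "card ?B1 + card ?B2 \<le> _")
proof -
  let ?E1 = "(\<lambda>x. (\<sigma> ! i, \<sigma> ! x)) ` ?B1" and ?E2 = "(\<lambda>x. (\<sigma> ! x, \<sigma> ! l)) ` ?B2"
  have inj: "inj_on ((!) \<sigma>) {l<..<i}"
    using assms(2,3) by (simp add: inj_on_def nth_eq_iff_index_eq)
  have "card ?E1 = card ?B1" "card ?E2 = card ?B2"
    using inj by (auto simp: inj_on_def intro!: card_image)
  moreover have "?E1 \<inter> ?E2 = {}"
    using assms(2,3) by (auto simp: nth_eq_iff_index_eq)
  moreover have "?E1 \<subseteq> {e \<in> A. affected T \<sigma> e}"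
    using assms(2-4) by (auto simp: affected_def arc_above_nth intro!: bexI[of _ "\<sigma> ! i"])
  moreover have "?E2 \<subseteq> {e \<in> A. affected T \<sigma> e}"
    using assms(2,3,5-7) by (auto simp: affected_def arc_above_nth intro!: bexI[of _ "\<sigma> ! j"])
  moreover have "finite ?E1" "finite ?E2" by simp_all
  ultimately have "card ?B1 + card ?B2 = card (?E1 \<union> ?E2)"
    by (simp add: card_Un_disjoint)
  also have "\<dots> \<le> cost A T \<sigma>"
    unfolding cost_def using \<open>?E1 \<subseteq> _\<close> \<open>?E2 \<subseteq> _\<close> assms(1) by (intro card_mono) auto
  finally show ?thesis .
qed

text \<open>Let \<open>j\<close> be the first terminal in \<open>[l, i]\<close>. Every vertex strictly between
  \<open>l\<close> and \<open>i\<close> is a forward midpoint unless it is the head of a backward arc from \<open>i\<close>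
  or the tail of a backward arc into \<open>l\<close>; such arcs lie above \<open>i\<close> or \<open>j\<close>, and hence
  are affected, except for those with tail before \<open>j\<close>, which regularity of the
  terminal-free interval \<open>[l, j)\<close> restricts to half of its length.\<close>

lemma card_forward_midpoints_left:
  assumes tour: "tournament V A" and ord: "is_order V \<sigma>" and reg: "regular_order A T \<sigma>"
    and li: "l < i" and iN: "i < length \<sigma>" and iT: "\<sigma> ! i \<in> T"
    and long: "2 * cost A T \<sigma> + 2 * k + 1 < i - l"
  shows "k + 1 \<le> card (forward_midpoints A \<sigma> (\<sigma> ! l) (\<sigma> ! i))"
proof -
  have dist: "distinct \<sigma>" using ord by (simp add: is_order_def)
  have fin_A: "finite A" using tour finite_subset unfolding tournament_def by blast
  obtain j where lj: "l \<le> j" and ji: "j \<le> i" and jT: "\<sigma> ! j \<in> T"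
    and no_T: "\<forall>m. l \<le> m \<longrightarrow> m < j \<longrightarrow> \<sigma> ! m \<notin> T"
  proof -
    obtain j where "l \<le> j \<and> j \<le> i \<and> \<sigma> ! j \<in> T" "\<forall>m<j. \<not> (l \<le> m \<and> m \<le> i \<and> \<sigma> ! m \<in> T)"
      using exists_least_iff[of "\<lambda>m. l \<le> m \<and> m \<le> i \<and> \<sigma> ! m \<in> T"] li iT by auto
    then show thesis using that by auto
  qed
  define S where "S = {l<..<i}"
  define B1 where "B1 = {x \<in> S. (\<sigma> ! i, \<sigma> ! x) \<in> A}"
  define B2 where "B2 = {x \<in> S. j \<le> x \<and> (\<sigma> ! x, \<sigma> ! l) \<in> A}"
  define B3 where "B3 = {x. l < x \<and> x < j \<and> (\<sigma> ! x, \<sigma> ! l) \<in> A}"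
  define G where "G = S - (B1 \<union> B2 \<union> B3)"
  have "card G = card ((!) \<sigma> ` G)"
    using iN dist by (simp add: card_image inj_on_def nth_eq_iff_index_eq G_def S_def)
  also have "\<dots> \<le> card (forward_midpoints A \<sigma> (\<sigma> ! l) (\<sigma> ! i))"
  proof (rule card_mono[OF finite_forward_midpoints[OF fin_A]], rule image_subsetI)
    fix x assume "x \<in> G"
    then show "\<sigma> ! x \<in> forward_midpoints A \<sigma> (\<sigma> ! l) (\<sigma> ! i)"
      using nth_in_forward_midpoints[OF tour ord _ _ iN]
      by (cases "j \<le> x") (auto simp: G_def S_def B1_def B2_def B3_def)
  qed
  finally have G: "card G \<le> card (forward_midpoints A \<sigma> (\<sigma> ! l) (\<sigma> ! i))" .
  have B12: "card B1 + card B2 \<le> cost A T \<sigma>"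
    using card_backward_across_terminals_le_cost[OF fin_A dist iN iT jT lj ji]
    by (simp add: B1_def B2_def S_def)
  have "2 * card B3 \<le> j - l - 1"
    using regular_order_card_backward_to_left_end[OF tour ord reg _ no_T] ji iN by (simp add: B3_def)
  then have B3: "2 * card B3 \<le> i - l - 1" using ji by linarith
  have "finite (G \<union> B1 \<union> B2 \<union> B3)"
    by (auto simp: G_def B1_def B2_def S_def B3_def intro: finite_subset[of _ "{..<j}"])
  then have "card S \<le> card (G \<union> B1 \<union> B2 \<union> B3)"
    by (rule card_mono) (auto simp: G_def)
  also have "\<dots> \<le> card G + card B1 + card B2 + card B3"
    by (meson add_le_mono card_Un_le le_trans order_refl)
  finally have "i - l - 1 \<le> card G + card B1 + card B2 + card B3" by (simp add: S_def)
  then show ?thesis using G B12 B3 long by linarith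
qed

lemma card_forward_midpoints_right:
  assumes tour: "tournament V A" and ord: "is_order V \<sigma>" and reg: "regular_order A T \<sigma>"
    and ir: "i < r" and rN: "r < length \<sigma>" and iT: "\<sigma> ! i \<in> T"
    and long: "2 * cost A T \<sigma> + 2 * k + 1 < r - i"
  shows "k + 1 \<le> card (forward_midpoints A \<sigma> (\<sigma> ! i) (\<sigma> ! r))"
proof -
  let ?n = "length \<sigma>"
  have dist: "distinct \<sigma>" and V: "V = set \<sigma>" using ord by (auto simp: is_order_def)
  have A_V: "A \<subseteq> set \<sigma> \<times> set \<sigma>" using tour V by (simp add: tournament_def)
  have nth_rev: "rev \<sigma> ! (?n - Suc r) = \<sigma> ! r" "rev \<sigma> ! (?n - Suc i) = \<sigma> ! i"
    using ir rN by (simp_all add: rev_nth Suc_diff_Suc)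
  have "k + 1 \<le> card (forward_midpoints (A\<inverse>) (rev \<sigma>) (rev \<sigma> ! (?n - Suc r)) (rev \<sigma> ! (?n - Suc i)))"
  proof (rule card_forward_midpoints_left)
    show "tournament V (A\<inverse>)" using tour by (rule tournament_converse)
    show "is_order V (rev \<sigma>)" using ord by (simp add: is_order_def)
    show "regular_order (A\<inverse>) T (rev \<sigma>)" using dist reg by (rule regular_order_converse_rev)
    show "2 * cost (A\<inverse>) T (rev \<sigma>) + 2 * k + 1 < ?n - Suc i - (?n - Suc r)"
      using long ir rN by (simp add: cost_converse_rev[OF dist A_V])
  qed (use ir rN iT nth_rev in auto)
  then show ?thesis by (simp add: nth_rev forward_midpoints_converse_rev[OF dist A_V])
qed

lemma arc_disjoint_forward_paths_through:
  assumes "k + 1 \<le> card (forward_midpoints A \<sigma> u t)" "k + 1 \<le> card (forward_midpoints A \<sigma> t w)"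
  shows "\<exists>P. (\<forall>m\<le>k. dpath A (P m) u w \<and> t \<in> set (P m) \<and> (\<forall>e\<in>path_arcs (P m). forward_arc \<sigma> e)) \<and>
    (\<forall>m\<le>k. \<forall>m'\<le>k. m \<noteq> m' \<longrightarrow> path_arcs (P m) \<inter> path_arcs (P m') = {})"
proof -
  obtain f where f: "f ` {..k} \<subseteq> forward_midpoints A \<sigma> u t" "inj_on f {..k}"
    using card_le_inj[of "{..k}" "forward_midpoints A \<sigma> u t"] assms(1) card.infinite by fastforce
  obtain g where g: "g ` {..k} \<subseteq> forward_midpoints A \<sigma> t w" "inj_on g {..k}"
    using card_le_inj[of "{..k}" "forward_midpoints A \<sigma> t w"] assms(2) card.infinite by fastforce
  define P where "P m = [u, f m, t, g m, w]" for m
  have arcs: "(u, f m) \<in> A" "(f m, t) \<in> A" "(t, g m) \<in> A" "(g m, w) \<in> A"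
    and order: "pos \<sigma> u < pos \<sigma> (f m)" "pos \<sigma> (f m) < pos \<sigma> t"
      "pos \<sigma> t < pos \<sigma> (g m)" "pos \<sigma> (g m) < pos \<sigma> w" if "m \<le> k" for m
    using f(1) g(1) that by (auto simp: forward_midpoints_def forward_arc_def)
  have path_arcs_P: "path_arcs (P m) = {(u, f m), (f m, t), (t, g m), (g m, w)}" for m
    by (simp add: path_arcs_def P_def insert_commute)
  show ?thesis
  proof (intro exI conjI allI impI)
    fix m assume m: "m \<le> k"
    show "t \<in> set (P m)" by (simp add: P_def)
    show "\<forall>e\<in>path_arcs (P m). forward_arc \<sigma> e"
      using order[OF m] by (simp add: path_arcs_P forward_arc_def)
    have "(P m ! q, P m ! Suc q) \<in> A" if "q < 4" for q
      using that arcs[OF m] by (auto simp: P_def numeral_eq_Suc less_Suc_eq)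
    moreover have "distinct (P m)" using order[OF m] by (auto simp: P_def)
    ultimately show "dpath A (P m) u w" by (simp add: dpath_def P_def)
  next
    fix m m' assume "m \<le> k" "m' \<le> k" "m \<noteq> m'"
    then show "path_arcs (P m) \<inter> path_arcs (P m') = {}"
      using order[of m] order[of m'] f(2) g(2) by (auto simp: path_arcs_P inj_on_def)
  qed
qed

theorem lemma3:
  fixes V :: "'a set" and A :: "('a \<times> 'a) set" and T :: "'a set" and k :: nat
    and \<alpha> :: real and \<sigma> :: "'a list" and t :: 'a and l r :: nat
  assumes "tournament V A" and "T \<subseteq> V" and "k \<ge> 1"
    and "\<alpha> \<ge> 1"
    and "is_order V \<sigma>" and "regular_order A T \<sigma>"
    and "real (cost A T \<sigma>) \<le> \<alpha> * real k"
    and "reduced V A T k \<sigma>"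
    and "t \<in> T"
    and "l < length \<sigma>" and "r < length \<sigma>"
    and "(\<sigma> ! r, \<sigma> ! l) \<in> A" and "affected T \<sigma> (\<sigma> ! r, \<sigma> ! l)"
    and "arc_above \<sigma> (\<sigma> ! r, \<sigma> ! l) t"
  shows "\<exists>i < length \<sigma>. t = \<sigma> ! i \<and>
           ((real l \<le> real i \<and> real i \<le> real l + (2 * (\<alpha> + 1) * real k + 2)) \<or>
            (real r - (2 * (\<alpha> + 1) * real k + 2) \<le> real i \<and> real i \<le> real r))"
proof -
  have dist: "distinct \<sigma>" using assms(5) by (simp add: is_order_def)
  obtain i where i: "t = \<sigma> ! i" "l \<le> i" "i \<le> r" "i < length \<sigma>"
    using assms(10,11,14) dist by (auto simp: arc_above_def ival_def pos_nth)
  show ?thesis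
  proof (rule ccontr)
    assume "\<not> ?thesis"
    then have "2 * cost A T \<sigma> + 2 * k + 1 < i - l" "2 * cost A T \<sigma> + 2 * k + 1 < r - i"
      using i assms(4,7) by (auto simp: of_nat_diff algebra_simps)
    then have "k + 1 \<le> card (forward_midpoints A \<sigma> (\<sigma> ! l) t)"
      "k + 1 \<le> card (forward_midpoints A \<sigma> t (\<sigma> ! r))"
      using card_forward_midpoints_left[OF assms(1,5,6)] card_forward_midpoints_right[OF assms(1,5,6)]
        i assms(9,11) by auto
    from arc_disjoint_forward_paths_through[OF this] show False
      using assms(8,9,12,13,14) unfolding reduced_def by blast
  qed
qed

end
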